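(* Let $(X,d)$ be an ultrametric space and $f:X\to X$ a surjective isometry. Then $(X,d,f)$ has the two-sided shadowing property.
   Context: An ultrametric space satisfies $d(x,z)\le\max\{d(x,y),d(y,z)\}$. For a bijection $f$, the two-sided shadowing property means: for every $\varepsilon>0$ there is $\delta>0$ such that for every sequence $(x_n)_{n\in\mathbb{Z}}$ with $d(f(x_n),x_{n+1})<\delta$ for all $n\in\mathbb{Z}$ there is $x\in X$ with $d(f^n(x),x_n)<\varepsilon$ for all $n\in\mathbb{Z}$ (negative powers being powers of $f^{-1}$). *)

theory Defs
  imports "HOL-Analysis.Analysis"
begin

definition ultrametric :: "('a::metric_space) itself \<Rightarrow> bool" where
  "ultrametric _ \<longleftrightarrow> (\<forall>x y z::'a. dist x z \<le> max (dist x y) (dist y z))"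

definition int_iter :: "('a \<Rightarrow> 'a) \<Rightarrow> int \<Rightarrow> 'a \<Rightarrow> 'a" where
  "int_iter f n = (if n \<ge> 0 then f ^^ nat n else (inv f) ^^ nat (- n))"

definition two_sided_shadowing :: "('a::metric_space \<Rightarrow> 'a) \<Rightarrow> bool" where
  "two_sided_shadowing f \<longleftrightarrow>
    (\<forall>\<epsilon>>0. \<exists>\<delta>>0. \<forall>xs :: int \<Rightarrow> 'a.
       (\<forall>n. dist (f (xs n)) (xs (n + 1)) < \<delta>) \<longrightarrow>
       (\<exists>x. \<forall>n. dist (int_iter f n x) (xs n) < \<epsilon>))"

end

theory Submission
  imports Defs
begin

text \<open>Take \<open>\<delta> = \<epsilon>\<close> and shadow by the point \<open>x\<^sub>0\<close> itself. In an ultrametric space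
  \<open>d(x,y) < \<epsilon>\<close> and \<open>d(y,z) < \<epsilon>\<close> give \<open>d(x,z) < \<epsilon>\<close>, so if \<open>f\<^sup>n x\<^sub>0\<close> is \<open>\<epsilon>\<close>-close to \<open>x\<^sub>n\<close>,
  then \<open>f\<^sup>n\<^sup>+\<^sup>1 x\<^sub>0\<close> is \<open>\<epsilon>\<close>-close to \<open>f x\<^sub>n\<close> (isometry) and hence to \<open>x\<^sub>n\<^sub>+\<^sub>1\<close>; errors never
  accumulate. The backward half is the same argument for the isometry \<open>f\<^sup>-\<^sup>1\<close> along the
  reversed pseudo-orbit.\<close>

lemma ultrametric_dist_less_trans:
  fixes x y z :: "'a::metric_space"
  assumes "ultrametric TYPE('a)" and "dist x y < e" and "dist y z < e"
  shows "dist x z < e"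
  using assms unfolding ultrametric_def by (meson le_less_trans max_less_iff_conj)

lemma ultrametric_isometry_shadows_pseudo_orbit:
  fixes f :: "'a::metric_space \<Rightarrow> 'a" and xs :: "nat \<Rightarrow> 'a"
  assumes "ultrametric TYPE('a)" and "\<And>x y. dist (f x) (f y) = dist x y"
    and "\<And>n. dist (f (xs n)) (xs (Suc n)) < e" and "e > 0"
  shows "dist ((f ^^ n) (xs 0)) (xs n) < e"
proof (induction n)
  case 0
  then show ?case using \<open>e > 0\<close> by simp
next
  case (Suc n)
  then have "dist ((f ^^ Suc n) (xs 0)) (f (xs n)) < e"
    using assms(2) by simp
  then show ?case
    using ultrametric_dist_less_trans[OF assms(1) _ assms(3)] by blast
qed

lemma surj_isometry_inv_isometry:
  fixes f :: "'a::metric_space \<Rightarrow> 'b::metric_space"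
  assumes "\<And>x y. dist (f x) (f y) = dist x y" and "surj f"
  shows "dist (inv f x) (inv f y) = dist x y"
  using assms by (metis surj_f_inv_f)

lemma surj_isometry_dist_inv:
  fixes f :: "'a::metric_space \<Rightarrow> 'b::metric_space"
  assumes "\<And>x y. dist (f x) (f y) = dist x y" and "surj f"
  shows "dist (inv f y) x = dist y (f x)"
  using assms by (metis surj_f_inv_f)

lemma int_iter_dist_less:
  assumes "\<And>n. dist ((f ^^ n) x) (xs (int n)) < e"
    and "\<And>n. dist ((inv f ^^ n) x) (xs (- int n)) < e"
  shows "dist (int_iter f n x) (xs n) < e"
proof (cases "n \<ge> 0")
  case True
  then show ?thesis using assms(1)[of "nat n"] by (simp add: int_iter_def)
next
  case False
  then show ?thesis using assms(2)[of "nat (- n)"] by (simp add: int_iter_def)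
qed

theorem proposition5p7:
  fixes f :: "'a::metric_space \<Rightarrow> 'a"
  assumes "ultrametric TYPE('a)"
    and "\<And>x y. dist (f x) (f y) = dist x y"
    and "surj f"
  shows "two_sided_shadowing f"
  unfolding two_sided_shadowing_def
proof (intro allI impI)
  fix \<epsilon> :: real
  assume "\<epsilon> > 0"
  show "\<exists>\<delta>>0. \<forall>xs. (\<forall>n. dist (f (xs n)) (xs (n + 1)) < \<delta>) \<longrightarrow>
      (\<exists>x. \<forall>n. dist (int_iter f n x) (xs n) < \<epsilon>)"
  proof (intro exI[of _ \<epsilon>] conjI allI impI)
    show "\<epsilon> > 0" by fact
  next
    fix xs :: "int \<Rightarrow> 'a"
    assume pseudo: "\<forall>n. dist (f (xs n)) (xs (n + 1)) < \<epsilon>"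
    have "dist (f (xs (int n))) (xs (int (Suc n))) < \<epsilon>" for n
      using pseudo[rule_format, of "int n"] by (simp add: add.commute)
    then have forward: "dist ((f ^^ n) (xs 0)) (xs (int n)) < \<epsilon>" for n
      using ultrametric_isometry_shadows_pseudo_orbit[OF assms(1,2), where xs = "\<lambda>n. xs (int n)"]
        \<open>\<epsilon> > 0\<close>
      by simp
    have "dist (inv f (xs (- int n))) (xs (- int (Suc n))) < \<epsilon>" for n
      using pseudo[rule_format, of "- int (Suc n)"] surj_isometry_dist_inv[OF assms(2,3)]
      by (simp add: dist_commute)
    then have backward: "dist ((inv f ^^ n) (xs 0)) (xs (- int n)) < \<epsilon>" for n
      using ultrametric_isometry_shadows_pseudo_orbit[OF assms(1) surj_isometry_inv_isometry[OF assms(2,3)],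
          of "\<lambda>n. xs (- int n)"] \<open>\<epsilon> > 0\<close>
      by simp
    show "\<exists>x. \<forall>n. dist (int_iter f n x) (xs n) < \<epsilon>"
      using int_iter_dist_less[OF forward backward] by blast
  qed
qed

end
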